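(* Let $\delta\in\mathbb{Z}$ and let $\lambda,\mu$ be bipartitions. (i) $\mu\in\operatorname{Rem}^\bullet(\lambda)$ (equivalently $\lambda\in\operatorname{Add}^\bullet(\mu)$) if and only if the following holds. The labels of $x_\lambda(\delta)$ and $x_\mu(\delta)$ agree at all vertices except for one pair of adjacent vertices $j,j+1$. At that pair, the labels (read at $j$, then at $j+1$) are one of the following four cases: - $x_\mu(\delta)$ is $(\times,\bigcirc)$ and $x_\lambda(\delta)$ is $(\vee,\wedge)$; - $x_\mu(\delta)$ is $(\wedge,\bigcirc)$ and $x_\lambda(\delta)$ is $(\bigcirc,\wedge)$; - $x_\mu(\delta)$ is $(\times,\vee)$ and $x_\lambda(\delta)$ is $(\vee,\times)$; - $x_\mu(\delta)$ is $(\wedge,\vee)$ and $x_\lambda(\delta)$ is $(\bigcirc,\times)$. (ii) $\mu\in\operatorname{Rem}^\circ(\lambda)$ (equivalently $\lambda\in\operatorname{Add}^\circ(\mu)$) if and only if the following holds. The labels of $x_\lambda(\delta)$ and $x_\mu(\delta)$ agree at all vertices except for one pair of adjacent vertices $j,j+1$. At that pair, the labels are one of the following four cases: - $x_\mu(\delta)$ is $(\bigcirc,\times)$ and $x_\lambda(\delta)$ is $(\vee,\wedge)$; - $x_\mu(\delta)$ is $(\bigcirc,\vee)$ and $x_\lambda(\delta)$ is $(\vee,\bigcirc)$; - $x_\mu(\delta)$ is $(\wedge,\times)$ and $x_\lambda(\delta)$ is $(\times,\wedge)$; - $x_\mu(\delta)$ is $(\wedge,\vee)$ and $x_\lambda(\delta)$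 is $(\times,\bigcirc)$.
   Context: A partition is a weakly decreasing sequence $\alpha=(\alpha_1,\alpha_2,\dots)$ of nonnegative integers, almost all zero. A bipartition is a pair $\lambda=(\lambda^\bullet,\lambda^\circ)$ of partitions. $\operatorname{Add}^\bullet(\lambda)$ (resp. $\operatorname{Add}^\circ(\lambda)$) is the set of bipartitions obtained from $\lambda$ by adding one box to the Young diagram of $\lambda^\bullet$ (resp. $\lambda^\circ$). $\operatorname{Rem}^\bullet(\lambda)$ and $\operatorname{Rem}^\circ(\lambda)$ are defined likewise by removing one box. For a parameter $\delta$ and bipartition $\lambda$, set $I_\wedge(\lambda)=\{\lambda^\bullet_i-(i-1): i\ge1\}$ and $I_\vee(\lambda,\delta)=\{i-\delta-\lambda^\circ_i: i\ge1\}$. The weight diagram $x_\lambda(\delta)$ labels each integer vertex $j$ of the number line by: - $\bigcirc$ if $j\notin I_\wedge(\lambda)\cup I_\vee(\lambda,\delta)$; - $\wedge$ if $j\in I_\wedge(\lambda)\setminus I_\vee(\lambda,\delta)$; - $\vee$ if $j\in I_\vee(\lambda,\delta)\setminus I_\wedge(\lambda)$; - $\times$ if $j\in I_\wedge(\lambda)\cap I_\vee(\lambda,\delta)$. *)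

theory Defs
  imports Main
begin

text \<open>A partition (alpha_1, alpha_2, ...) is stored as a function a :: nat => nat
  with a (i - 1) = alpha_i, i.e. 0-based storage of the 1-based sequence.\<close>

definition is_partition :: "(nat \<Rightarrow> nat) \<Rightarrow> bool" where
  "is_partition a \<longleftrightarrow> (\<forall>i. a (Suc i) \<le> a i) \<and> finite {i. a i \<noteq> 0}"

type_synonym bipartition = "(nat \<Rightarrow> nat) \<times> (nat \<Rightarrow> nat)"

definition is_bipartition :: "bipartition \<Rightarrow> bool" where
  "is_bipartition l \<longleftrightarrow> is_partition (fst l) \<and> is_partition (snd l)"

definition add_box :: "(nat \<Rightarrow> nat) \<Rightarrow> (nat \<Rightarrow> nat) set" where
  "add_box a = {b. is_partition b \<and> (\<exists>k. b = a(k := Suc (a k)))}"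

definition rem_box :: "(nat \<Rightarrow> nat) \<Rightarrow> (nat \<Rightarrow> nat) set" where
  "rem_box a = {b. is_partition b \<and> (\<exists>k. 0 < a k \<and> b = a(k := a k - 1))}"

definition Add_bullet :: "bipartition \<Rightarrow> bipartition set" where
  "Add_bullet l = {(b, snd l) | b. b \<in> add_box (fst l)}"

definition Add_circ :: "bipartition \<Rightarrow> bipartition set" where
  "Add_circ l = {(fst l, b) | b. b \<in> add_box (snd l)}"

definition Rem_bullet :: "bipartition \<Rightarrow> bipartition set" where
  "Rem_bullet l = {(b, snd l) | b. b \<in> rem_box (fst l)}"

definition Rem_circ :: "bipartition \<Rightarrow> bipartition set" where
  "Rem_circ l = {(fst l, b) | b. b \<in> rem_box (snd l)}"

definition I_wedge :: "bipartition \<Rightarrow> int set" where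
  "I_wedge l = {int (fst l (i - 1)) - (int i - 1) | i. i \<ge> 1}"

definition I_vee :: "bipartition \<Rightarrow> int \<Rightarrow> int set" where
  "I_vee l \<delta> = {int i - \<delta> - int (snd l (i - 1)) | i. i \<ge> 1}"

datatype label = Circ | Wedge | Vee | Cross

definition weight_diagram :: "bipartition \<Rightarrow> int \<Rightarrow> int \<Rightarrow> label" where
  "weight_diagram l \<delta> j =
     (if j \<in> I_wedge l \<and> j \<in> I_vee l \<delta> then Cross
      else if j \<in> I_wedge l then Wedge
      else if j \<in> I_vee l \<delta> then Vee
      else Circ)"

end

theory Submission
  imports Defs
begin

text \<open>A partition \<open>a\<close> is encoded by its set of beta numbers \<open>a\<^sub>k - k\<close>, a strictly decreasing
  sequence of integers; \<open>I_wedge\<close> is the beta set of \<open>\<lambda>\<^sup>\<bullet>\<close> and \<open>I_vee\<close> is the reflection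
  \<open>x \<mapsto> 1 - \<delta> - x\<close> of the beta set of \<open>\<lambda>\<^sup>\<circ>\<close>. The beta set determines the partition, and removing
  a box from row \<open>k\<close> lowers the beta number \<open>a\<^sub>k - k\<close> by one, which keeps a partition exactly
  when the position below is free. So removing a box from \<open>\<lambda>\<^sup>\<bullet>\<close> moves a \<open>\<wedge>\<close> from \<open>j + 1\<close>
  to a position \<open>j\<close> without \<open>\<wedge>\<close>, and removing one from \<open>\<lambda>\<^sup>\<circ>\<close> moves a \<open>\<vee>\<close> from \<open>j\<close> to a
  position \<open>j + 1\<close> without \<open>\<vee>\<close>; the four label patterns list the possible
  \<open>\<vee>\<close>-occupations (resp. \<open>\<wedge>\<close>-occupations) of the two positions.\<close>

definition beta_seq :: "(nat \<Rightarrow> nat) \<Rightarrow> nat \<Rightarrow> int" where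
  "beta_seq a k = int (a k) - int k"

definition beta_set :: "(nat \<Rightarrow> nat) \<Rightarrow> int set" where
  "beta_set a = range (beta_seq a)"

lemma beta_seq_Suc_less:
  assumes "is_partition a"
  shows "beta_seq a (Suc k) < beta_seq a k"
proof -
  have "a (Suc k) \<le> a k" using assms unfolding is_partition_def by blast
  then show ?thesis unfolding beta_seq_def by linarith
qed

lemma beta_seq_less_iff: "is_partition a \<Longrightarrow> beta_seq a n < beta_seq a m \<longleftrightarrow> m < n"
  using lift_Suc_mono_less_iff[of "\<lambda>k. - beta_seq a k"] beta_seq_Suc_less[of a] by simp

lemma beta_seq_le_iff: "is_partition a \<Longrightarrow> beta_seq a n \<le> beta_seq a m \<longleftrightarrow> m \<le> n"
  by (simp add: beta_seq_less_iff flip: not_less)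

lemma beta_seq_eq_iff: "is_partition a \<Longrightarrow> beta_seq a m = beta_seq a n \<longleftrightarrow> m = n"
  by (simp add: order_eq_iff beta_seq_le_iff)

lemma beta_seq_le_of_beta_set_subset:
  assumes a: "is_partition a" and b: "is_partition b"
    and sub: "beta_set a \<subseteq> beta_set b"
    and below: "\<And>m. m < k \<Longrightarrow> beta_seq a m = beta_seq b m"
  shows "beta_seq a k \<le> beta_seq b k"
proof -
  obtain m where m: "beta_seq a k = beta_seq b m"
    using sub unfolding beta_set_def by auto
  have "k \<le> m"
  proof (rule ccontr)
    assume "\<not> k \<le> m"
    then have "beta_seq a k = beta_seq a m" using m below by simp
    with \<open>\<not> k \<le> m\<close> show False using beta_seq_eq_iff[OF a] by simp
  qed
  then show ?thesis using m beta_seq_le_iff[OF b] by simp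
qed

lemma beta_set_inject:
  assumes a: "is_partition a" and b: "is_partition b"
  shows "beta_set a = beta_set b \<longleftrightarrow> a = b"
proof
  assume eq: "beta_set a = beta_set b"
  have "beta_seq a k = beta_seq b k" for k
  proof (induction k rule: less_induct)
    case (less k)
    then show ?case
      using beta_seq_le_of_beta_set_subset[OF a b, of k] beta_seq_le_of_beta_set_subset[OF b a, of k]
      by (simp add: eq order_antisym)
  qed
  then show "a = b" by (auto simp: beta_seq_def fun_eq_iff)
qed simp

lemma not_in_beta_set_between:
  "is_partition a \<Longrightarrow> beta_seq a (Suc k) < x \<Longrightarrow> x < beta_seq a k \<Longrightarrow> x \<notin> beta_set a"
  by (auto simp: beta_set_def beta_seq_less_iff)

lemma beta_set_fun_upd_decrement:
  assumes a: "is_partition a" and "0 < a k"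
  shows "beta_set (a(k := a k - 1)) = insert (beta_seq a k - 1) (beta_set a - {beta_seq a k})"
proof -
  have "beta_seq (a(k := a k - 1)) = (beta_seq a)(k := beta_seq a k - 1)"
    using \<open>0 < a k\<close> by (auto simp: beta_seq_def of_nat_diff fun_eq_iff)
  moreover have "inj (beta_seq a)" using beta_seq_eq_iff[OF a] by (auto intro: injI)
  ultimately show ?thesis
    unfolding beta_set_def by (auto simp: fun_upd_image inj_eq)
qed

lemma is_partition_fun_upd_decrement:
  assumes a: "is_partition a" and "a (Suc k) < a k"
  shows "is_partition (a(k := a k - 1))"
proof -
  have "(a(k := a k - 1)) (Suc i) \<le> (a(k := a k - 1)) i" for i
    using a \<open>a (Suc k) < a k\<close> unfolding is_partition_def
    by (cases "i = k") (auto intro: le_trans[OF diff_le_self])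
  moreover have "{i. (a(k := a k - 1)) i \<noteq> 0} \<subseteq> {i. a i \<noteq> 0}" by auto
  then have "finite {i. (a(k := a k - 1)) i \<noteq> 0}"
    using a finite_subset unfolding is_partition_def by blast
  ultimately show ?thesis unfolding is_partition_def by blast
qed

definition bead_step_down :: "int set \<Rightarrow> int set \<Rightarrow> bool" where
  "bead_step_down A B \<longleftrightarrow> (\<exists>j. j \<notin> A \<and> j + 1 \<in> A \<and> B = insert j (A - {j + 1}))"

lemma mem_rem_box_iff_bead_step_down:
  assumes a: "is_partition a" and b: "is_partition b"
  shows "b \<in> rem_box a \<longleftrightarrow> bead_step_down (beta_set a) (beta_set b)"
proof
  assume "b \<in> rem_box a"
  then obtain k where k: "0 < a k" "b = a(k := a k - 1)" unfolding rem_box_def by auto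
  have "b (Suc k) \<le> b k" using b unfolding is_partition_def by blast
  then have "beta_seq a (Suc k) < beta_seq a k - 1"
    using k by (simp add: beta_seq_def of_nat_diff)
  then have "beta_seq a k - 1 \<notin> beta_set a" using not_in_beta_set_between[OF a] by simp
  then show "bead_step_down (beta_set a) (beta_set b)"
    unfolding bead_step_down_def beta_set_fun_upd_decrement[OF a k(1), folded k(2)]
    by (intro exI[of _ "beta_seq a k - 1"]) (simp add: beta_set_def)
next
  assume "bead_step_down (beta_set a) (beta_set b)"
  then obtain j where j: "j \<notin> beta_set a" "j + 1 \<in> beta_set a"
    "beta_set b = insert j (beta_set a - {j + 1})"
    unfolding bead_step_down_def by blast
  obtain k where k: "beta_seq a k = j + 1" using j(2) unfolding beta_set_def by auto
  have "beta_seq a (Suc k) \<noteq> j" using j(1) by (auto simp: beta_set_def)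
  then have "a (Suc k) \<noteq> a k" using k by (auto simp: beta_seq_def)
  moreover have "a (Suc k) \<le> a k" using a unfolding is_partition_def by blast
  ultimately have less: "a (Suc k) < a k" by simp
  then have "beta_set (a(k := a k - 1)) = beta_set b"
    using beta_set_fun_upd_decrement[OF a] j(3) k by simp
  then have "b = a(k := a k - 1)"
    using beta_set_inject[OF is_partition_fun_upd_decrement[OF a less] b] by simp
  then show "b \<in> rem_box a"
    using b less unfolding rem_box_def by (auto intro!: exI[of _ k])
qed

lemma mem_add_box_iff_mem_rem_box:
  assumes "is_partition a" and "is_partition b"
  shows "b \<in> add_box a \<longleftrightarrow> a \<in> rem_box b"
proof
  assume "b \<in> add_box a"
  then obtain k where "b = a(k := Suc (a k))" unfolding add_box_def by auto
  then show "a \<in> rem_box b"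
    using assms(1) unfolding rem_box_def by (auto intro!: exI[of _ k])
next
  assume "a \<in> rem_box b"
  then obtain k where "0 < b k" "a = b(k := b k - 1)" unfolding rem_box_def by auto
  then show "b \<in> add_box a"
    using assms(2) unfolding add_box_def by (auto intro!: exI[of _ k] simp: fun_eq_iff)
qed

lemma bead_step_down_reflect:
  fixes c :: int
  shows "bead_step_down ((\<lambda>x. c - x) ` B) ((\<lambda>x. c - x) ` A) \<longleftrightarrow> bead_step_down A B"
proof -
  have mem_reflect: "x \<in> (\<lambda>y. c - y) ` S \<longleftrightarrow> c - x \<in> S" for x and S :: "int set"
    by (auto intro!: rev_image_eqI[of "c - x"])
  have step: "bead_step_down ((\<lambda>x. c - x) ` B) ((\<lambda>x. c - x) ` A)"
    if "bead_step_down A B" for A B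
  proof -
    obtain j where j: "j \<notin> A" "j + 1 \<in> A" "B = insert j (A - {j + 1})"
      using \<open>bead_step_down A B\<close> unfolding bead_step_down_def by blast
    show ?thesis
      unfolding bead_step_down_def
      by (rule exI[of _ "c - j - 1"]) (auto simp: mem_reflect j)
  qed
  have "(\<lambda>x. c - x) ` (\<lambda>x. c - x) ` S = S" for S :: "int set"
    by (simp add: image_image)
  then show ?thesis using step[of "(\<lambda>x. c - x) ` B" "(\<lambda>x. c - x) ` A"] step by metis
qed

lemma beta_set_one_based: "beta_set a = {int (a (i - 1)) - (int i - 1) | i. i \<ge> 1}"
proof -
  have "{int (a (i - 1)) - (int i - 1) | i. i \<ge> 1} = beta_seq a ` (\<lambda>i. i - 1) ` {1..}"
    by (auto simp: image_image beta_seq_def of_nat_diff)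
  also have "(\<lambda>i. i - 1) ` {1::nat..} = UNIV"
    by (force simp: image_iff intro: bexI[where x = "Suc x" for x])
  finally show ?thesis unfolding beta_set_def ..
qed

lemma I_wedge_eq_beta_set: "I_wedge l = beta_set (fst l)"
  by (simp add: I_wedge_def beta_set_one_based)

lemma I_vee_eq_reflect_beta_set: "I_vee l \<delta> = (\<lambda>x. 1 - \<delta> - x) ` beta_set (snd l)"
  unfolding I_vee_def beta_set_one_based by (auto simp: image_iff) force+

lemma I_wedge_eq_iff:
  "is_bipartition lam \<Longrightarrow> is_bipartition mu \<Longrightarrow> I_wedge lam = I_wedge mu \<longleftrightarrow> fst lam = fst mu"
  unfolding is_bipartition_def I_wedge_eq_beta_set by (simp add: beta_set_inject)

lemma I_vee_eq_iff:
  "is_bipartition lam \<Longrightarrow> is_bipartition mu \<Longrightarrow> I_vee lam \<delta> = I_vee mu \<delta> \<longleftrightarrow> snd lam = snd mu"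
  unfolding is_bipartition_def I_vee_eq_reflect_beta_set
  by (simp add: inj_image_eq_iff inj_def beta_set_inject)

definition diagram_label :: "int set \<Rightarrow> int set \<Rightarrow> int \<Rightarrow> label" where
  "diagram_label W V j =
     (if j \<in> W \<and> j \<in> V then Cross else if j \<in> W then Wedge else if j \<in> V then Vee else Circ)"

lemma weight_diagram_eq_diagram_label: "weight_diagram l \<delta> = diagram_label (I_wedge l) (I_vee l \<delta>)"
  by (simp add: fun_eq_iff weight_diagram_def diagram_label_def)

lemma diagram_label_eq_iff:
  "diagram_label W V k = diagram_label W' V' k \<longleftrightarrow> (k \<in> W \<longleftrightarrow> k \<in> W') \<and> (k \<in> V \<longleftrightarrow> k \<in> V')"
  by (auto simp: diagram_label_def)

lemma bead_step_down_iff_change_at: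
  "bead_step_down A B \<longleftrightarrow>
     (\<exists>j. A - {j, j + 1} = B - {j, j + 1} \<and> j \<notin> A \<and> j + 1 \<in> A \<and> j \<in> B \<and> j + 1 \<notin> B)"
  (is "_ \<longleftrightarrow> (\<exists>j. ?change_at j)")
proof
  assume "bead_step_down A B"
  then obtain j where "j \<notin> A" "j + 1 \<in> A" "B = insert j (A - {j + 1})"
    unfolding bead_step_down_def by blast
  then have "?change_at j" by auto
  then show "\<exists>j. ?change_at j" ..
next
  assume "\<exists>j. ?change_at j"
  then obtain j where "?change_at j" by blast
  then have "B = insert j (A - {j + 1})" "j \<notin> A" "j + 1 \<in> A" by (auto simp: set_eq_iff)
  then show "bead_step_down A B" unfolding bead_step_down_def by blast
qed

lemma set_eq_iff_Diff_pair_eq: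
  "A = B \<longleftrightarrow> A - {a, b} = B - {a, b} \<and> (a \<in> A \<longleftrightarrow> a \<in> B) \<and> (b \<in> A \<longleftrightarrow> b \<in> B)"
  by (simp add: set_eq_iff) blast

lemma diagram_label_agree_off_pair_iff:
  "(\<forall>k. k \<noteq> a \<and> k \<noteq> b \<longrightarrow> diagram_label W V k = diagram_label W' V' k)
   \<longleftrightarrow> W - {a, b} = W' - {a, b} \<and> V - {a, b} = V' - {a, b}"
  by (simp add: diagram_label_eq_iff set_eq_iff) blast

lemma diagram_label_wedge_step_iff:
  "(\<exists>j. (\<forall>k. k \<noteq> j \<and> k \<noteq> j + 1 \<longrightarrow> diagram_label Wl Vl k = diagram_label Wm Vm k) \<and>
     ((diagram_label Wm Vm j, diagram_label Wm Vm (j+1), diagram_label Wl Vl j, diagram_label Wl Vl (j+1))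
        \<in> {(Cross, Circ, Vee, Wedge), (Wedge, Circ, Circ, Wedge),
           (Cross, Vee, Vee, Cross), (Wedge, Vee, Circ, Cross)}))
   \<longleftrightarrow> Vl = Vm \<and> bead_step_down Wl Wm"
proof -
  have pattern:
    "(diagram_label Wm Vm j, diagram_label Wm Vm (j+1), diagram_label Wl Vl j, diagram_label Wl Vl (j+1))
        \<in> {(Cross, Circ, Vee, Wedge), (Wedge, Circ, Circ, Wedge),
           (Cross, Vee, Vee, Cross), (Wedge, Vee, Circ, Cross)}
     \<longleftrightarrow> j \<notin> Wl \<and> j + 1 \<in> Wl \<and> j \<in> Wm \<and> j + 1 \<notin> Wm \<and>
         (j \<in> Vl \<longleftrightarrow> j \<in> Vm) \<and> (j + 1 \<in> Vl \<longleftrightarrow> j + 1 \<in> Vm)" for j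
    by (auto simp: diagram_label_def)
  show ?thesis
    unfolding pattern diagram_label_agree_off_pair_iff bead_step_down_iff_change_at
    using set_eq_iff_Diff_pair_eq[of Vl Vm] by blast
qed

lemma diagram_label_vee_step_iff:
  "(\<exists>j. (\<forall>k. k \<noteq> j \<and> k \<noteq> j + 1 \<longrightarrow> diagram_label Wl Vl k = diagram_label Wm Vm k) \<and>
     ((diagram_label Wm Vm j, diagram_label Wm Vm (j+1), diagram_label Wl Vl j, diagram_label Wl Vl (j+1))
        \<in> {(Circ, Cross, Vee, Wedge), (Circ, Vee, Vee, Circ),
           (Wedge, Cross, Cross, Wedge), (Wedge, Vee, Cross, Circ)}))
   \<longleftrightarrow> Wl = Wm \<and> bead_step_down Vm Vl"
proof -
  have pattern:
    "(diagram_label Wm Vm j, diagram_label Wm Vm (j+1), diagram_label Wl Vl j, diagram_label Wl Vl (j+1))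
        \<in> {(Circ, Cross, Vee, Wedge), (Circ, Vee, Vee, Circ),
           (Wedge, Cross, Cross, Wedge), (Wedge, Vee, Cross, Circ)}
     \<longleftrightarrow> j \<notin> Vm \<and> j + 1 \<in> Vm \<and> j \<in> Vl \<and> j + 1 \<notin> Vl \<and>
         (j \<in> Wl \<longleftrightarrow> j \<in> Wm) \<and> (j + 1 \<in> Wl \<longleftrightarrow> j + 1 \<in> Wm)" for j
    by (auto simp: diagram_label_def)
  show ?thesis
    unfolding pattern diagram_label_agree_off_pair_iff bead_step_down_iff_change_at
      eq_commute[of "Vm - S" "Vl - S" for S]
    using set_eq_iff_Diff_pair_eq[of Wl Wm] by blast
qed

lemma mem_Rem_bullet_iff_bead_step_down:
  assumes "is_bipartition lam" and "is_bipartition mu"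
  shows "mu \<in> Rem_bullet lam \<longleftrightarrow>
    I_vee lam \<delta> = I_vee mu \<delta> \<and> bead_step_down (I_wedge lam) (I_wedge mu)"
proof -
  have "mu \<in> Rem_bullet lam \<longleftrightarrow> snd lam = snd mu \<and> fst mu \<in> rem_box (fst lam)"
    unfolding Rem_bullet_def by (cases mu) auto
  with assms show ?thesis
    unfolding I_vee_eq_iff[OF assms] I_wedge_eq_beta_set is_bipartition_def
    by (simp add: mem_rem_box_iff_bead_step_down)
qed

lemma mem_Rem_circ_iff_bead_step_down:
  assumes "is_bipartition lam" and "is_bipartition mu"
  shows "mu \<in> Rem_circ lam \<longleftrightarrow>
    I_wedge lam = I_wedge mu \<and> bead_step_down (I_vee mu \<delta>) (I_vee lam \<delta>)"
proof -
  have "mu \<in> Rem_circ lam \<longleftrightarrow> fst lam = fst mu \<and> snd mu \<in> rem_box (snd lam)"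
    unfolding Rem_circ_def by (cases mu) auto
  with assms show ?thesis
    unfolding I_wedge_eq_iff[OF assms] I_vee_eq_reflect_beta_set bead_step_down_reflect
      is_bipartition_def
    by (simp add: mem_rem_box_iff_bead_step_down)
qed

lemma mem_Add_bullet_iff_mem_Rem_bullet:
  "is_bipartition lam \<Longrightarrow> is_bipartition mu \<Longrightarrow> lam \<in> Add_bullet mu \<longleftrightarrow> mu \<in> Rem_bullet lam"
  unfolding Add_bullet_def Rem_bullet_def is_bipartition_def
  by (cases lam; cases mu) (auto simp: mem_add_box_iff_mem_rem_box)

lemma mem_Add_circ_iff_mem_Rem_circ:
  "is_bipartition lam \<Longrightarrow> is_bipartition mu \<Longrightarrow> lam \<in> Add_circ mu \<longleftrightarrow> mu \<in> Rem_circ lam"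
  unfolding Add_circ_def Rem_circ_def is_bipartition_def
  by (cases lam; cases mu) (auto simp: mem_add_box_iff_mem_rem_box)

theorem proposition2p1:
  fixes \<delta> :: int and lam mu :: bipartition
  assumes "is_bipartition lam" and "is_bipartition mu"
  shows
   "(mu \<in> Rem_bullet lam \<longleftrightarrow>
      (\<exists>j::int. (\<forall>k. k \<noteq> j \<and> k \<noteq> j + 1 \<longrightarrow> weight_diagram lam \<delta> k = weight_diagram mu \<delta> k) \<and>
        ((weight_diagram mu \<delta> j, weight_diagram mu \<delta> (j+1), weight_diagram lam \<delta> j, weight_diagram lam \<delta> (j+1))
           \<in> {(Cross, Circ, Vee, Wedge), (Wedge, Circ, Circ, Wedge),
              (Cross, Vee, Vee, Cross), (Wedge, Vee, Circ, Cross)})))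
    \<and> (lam \<in> Add_bullet mu \<longleftrightarrow> mu \<in> Rem_bullet lam)
    \<and> (mu \<in> Rem_circ lam \<longleftrightarrow>
      (\<exists>j::int. (\<forall>k. k \<noteq> j \<and> k \<noteq> j + 1 \<longrightarrow> weight_diagram lam \<delta> k = weight_diagram mu \<delta> k) \<and>
        ((weight_diagram mu \<delta> j, weight_diagram mu \<delta> (j+1), weight_diagram lam \<delta> j, weight_diagram lam \<delta> (j+1))
           \<in> {(Circ, Cross, Vee, Wedge), (Circ, Vee, Vee, Circ),
              (Wedge, Cross, Cross, Wedge), (Wedge, Vee, Cross, Circ)})))
    \<and> (lam \<in> Add_circ mu \<longleftrightarrow> mu \<in> Rem_circ lam)"
  unfolding weight_diagram_eq_diagram_label diagram_label_wedge_step_iff diagram_label_vee_step_iff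
    mem_Rem_bullet_iff_bead_step_down[OF assms, where \<delta> = \<delta>]
    mem_Rem_circ_iff_bead_step_down[OF assms, where \<delta> = \<delta>]
    mem_Add_bullet_iff_mem_Rem_bullet[OF assms] mem_Add_circ_iff_mem_Rem_circ[OF assms]
  by simp

end
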